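(* Let $X$ be a finite set, $\equiv$ an equivalence relation on $X$, and $k$ a natural number. Let $\mathcal{B}$ be the set of subsets $B \subseteq X$ with $|B| = k$ such that not all $k$ elements of $B$ are equivalent under $\equiv$. If $\mathcal{B} \neq \emptyset$, then $\mathcal{B}$ is the set of bases of a matroid on $X$. *)

theory Defs
  imports Main
begin

definition matroid_bases :: "'a set \<Rightarrow> 'a set set \<Rightarrow> bool" where
  "matroid_bases X \<B> \<longleftrightarrow>
     finite X \<and> \<B> \<noteq> {} \<and> (\<forall>B\<in>\<B>. B \<subseteq> X) \<and>
     (\<forall>B1\<in>\<B>. \<forall>B2\<in>\<B>. \<forall>x\<in>B1 - B2. \<exists>y\<in>B2 - B1. insert y (B1 - {x}) \<in> \<B>)"

end

theory Submission
  imports Defs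
begin

text \<open>Basis exchange can only fail if every candidate \<open>insert y (B1 - {x})\<close> lies in one
  class. These candidates all share an element \<open>c\<close> of \<open>B1 - {x}\<close>, so then every element
  of \<open>B2\<close> is equivalent to \<open>c\<close> and \<open>B2\<close> itself lies in one class. Such a \<open>c\<close> exists since a
  set meeting two classes has at least two elements.\<close>

definition all_related :: "('a \<times> 'a) set \<Rightarrow> 'a set \<Rightarrow> bool" where
  "all_related R B \<longleftrightarrow> (\<forall>x\<in>B. \<forall>y\<in>B. (x, y) \<in> R)"

lemma all_related_subset_singleton:
  assumes "refl_on X R" and "B \<subseteq> X" and "B \<subseteq> {x}"
  shows "all_related R B"
  using assms unfolding all_related_def refl_on_def by blast

lemma all_related_if_related_to:
  assumes "sym R" and "trans R" and "\<And>z. z \<in> B \<Longrightarrow> (z, c) \<in> R"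
  shows "all_related R B"
  using assms unfolding all_related_def by (meson symE transE)

lemma card_insert_Diff_singleton:
  assumes "finite B" and "x \<in> B" and "y \<notin> B"
  shows "card (insert y (B - {x})) = card B"
  using assms by (metis DiffD1 card_Suc_Diff1 card_insert_disjoint finite_Diff)

lemma exchange_not_all_related:
  assumes "equiv X R" and "finite B1" and "B1 \<subseteq> X" and "card B2 = card B1"
    and x: "x \<in> B1 - B2"
    and "\<not> all_related R B1" and "\<not> all_related R B2"
  shows "\<exists>y\<in>B2 - B1. \<not> all_related R (insert y (B1 - {x}))"
proof (rule ccontr)
  assume "\<not> ?thesis"
  then have related: "(a, b) \<in> R"
    if "y \<in> B2 - B1" and "a \<in> insert y (B1 - {x})" and "b \<in> insert y (B1 - {x})" for y a b
    using that unfolding all_related_def by blast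
  from assms(1) have "refl_on X R" and "sym R" and "trans R"
    by (auto elim: equivE)
  obtain c where c: "c \<in> B1 - {x}"
    using assms(3,6) all_related_subset_singleton[OF \<open>refl_on X R\<close>] by blast
  have "\<not> B2 \<subseteq> B1"
    using assms(2,4) x card_subset_eq by blast
  then obtain y0 where y0: "y0 \<in> B2 - B1"
    by blast
  have "(z, c) \<in> R" if "z \<in> B2" for z
  proof (cases "z \<in> B1")
    case True
    then show ?thesis
      using related[OF y0] that x c by blast
  next
    case False
    then show ?thesis
      using related[of z] that c by blast
  qed
  then have "all_related R B2"
    by (rule all_related_if_related_to[OF \<open>sym R\<close> \<open>trans R\<close>])
  with assms(7) show False ..
qed

theorem proposition3p16:
  fixes X :: "'a set" and R :: "('a \<times> 'a) set" and k :: nat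
  assumes "finite X"
    and "equiv X R"
    and "{B. B \<subseteq> X \<and> card B = k \<and> \<not> (\<forall>x\<in>B. \<forall>y\<in>B. (x, y) \<in> R)} \<noteq> {}"
  shows "matroid_bases X {B. B \<subseteq> X \<and> card B = k \<and> \<not> (\<forall>x\<in>B. \<forall>y\<in>B. (x, y) \<in> R)}"
proof -
  let ?\<B> = "{B. B \<subseteq> X \<and> card B = k \<and> \<not> all_related R B}"
  have exchange: "\<exists>y\<in>B2 - B1. insert y (B1 - {x}) \<in> ?\<B>"
    if B1: "B1 \<in> ?\<B>" and B2: "B2 \<in> ?\<B>" and x: "x \<in> B1 - B2" for B1 B2 x
  proof -
    have "finite B1"
      using B1 assms(1) finite_subset by blast
    then obtain y where y: "y \<in> B2 - B1" and "\<not> all_related R (insert y (B1 - {x}))"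
      using exchange_not_all_related[OF assms(2) _ _ _ x] B1 B2 by auto
    moreover have "card (insert y (B1 - {x})) = k"
      using card_insert_Diff_singleton[OF \<open>finite B1\<close>] B1 x y by simp
    ultimately show ?thesis
      using B1 B2 x by blast
  qed
  have "?\<B> \<noteq> {}"
    using assms(3) unfolding all_related_def .
  then have "matroid_bases X ?\<B>"
    unfolding matroid_bases_def using assms(1) by (intro conjI ballI exchange) auto
  then show ?thesis
    unfolding all_related_def .
qed

end
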